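(* Let $G$ be a $k$-uniform hypergraph with vertex set $\{1,\dots,n\}$ and edges $e_1,\dots,e_\ell$ (each a $k$-subset of $\{1,\dots,n\}$). Then $G$ is not $2$-DP-colorable if and only if there exist $(n-k)$-faces $a^1,\dots,a^\ell$ of $Q_2^n$ such that, for each $j$, the set of non-asterisk positions of $a^j$ is $e_j$, and $\bigcup_{j=1}^{\ell}(a^j\cup\overline{a^j})=Q_2^n$, where $\overline{a^j}$ denotes the face antipodal to $a^j$.
   Context: $Q_2^n=\{0,1\}^n$. An $m$-face of $Q_2^n$ is given by a tuple $a=(a_1,\dots,a_n)\in\{0,1,*\}^n$ with exactly $m$ entries equal to $*$; it denotes the set $\{x\in Q_2^n : x_i=a_i \text{ whenever } a_i\in\{0,1\}\}$. The face antipodal to $a$ is $\overline{a}$ with $\overline{a}_i=*$ where $a_i=*$ and $\overline{a}_i=1-a_i$ otherwise. For a hypergraph $G$, a collection $\Phi=(\varphi_e)_{e\in E(G)}$ consists of maps $\varphi_e:e\to\{0,1\}$; a $2$-coloring $f:V(G)\to\{0,1\}$ avoids $\Phi$ if for every edge $e$, $f|_e\neq\varphi_e$ and $f|_e\neq\varphi_e\oplus 1$ (the complementary map). $G$ is $2$-DP-colorable if for every such collection $\Phi$ there is a $2$-coloring avoiding $\Phi$. *)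

theory Defs
  imports Main "HOL-Library.FuncSet"
begin

definition cube :: "nat \<Rightarrow> (nat \<Rightarrow> nat) set" where
  "cube n = ({1..n} \<rightarrow>\<^sub>E {0, 1})"

text \<open>A tuple in {0,1,*}^n: None plays the role of the asterisk.\<close>
definition tuples :: "nat \<Rightarrow> (nat \<Rightarrow> nat option) set" where
  "tuples n = ({1..n} \<rightarrow>\<^sub>E {None, Some 0, Some 1})"

definition is_face :: "nat \<Rightarrow> nat \<Rightarrow> (nat \<Rightarrow> nat option) \<Rightarrow> bool" where
  "is_face n m a \<longleftrightarrow> a \<in> tuples n \<and> card {i \<in> {1..n}. a i = None} = m"

definition fixed_positions :: "nat \<Rightarrow> (nat \<Rightarrow> nat option) \<Rightarrow> nat set" where
  "fixed_positions n a = {i \<in> {1..n}. a i \<noteq> None}"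

definition face_set :: "nat \<Rightarrow> (nat \<Rightarrow> nat option) \<Rightarrow> (nat \<Rightarrow> nat) set" where
  "face_set n a = {x \<in> cube n. \<forall>i \<in> {1..n}. a i \<noteq> None \<longrightarrow> x i = the (a i)}"

definition antipodal :: "nat \<Rightarrow> (nat \<Rightarrow> nat option) \<Rightarrow> (nat \<Rightarrow> nat option)" where
  "antipodal n a = (\<lambda>i \<in> {1..n}. map_option (\<lambda>b. 1 - b) (a i))"

definition avoids :: "(nat set) list \<Rightarrow> (nat \<Rightarrow> nat \<Rightarrow> nat) \<Rightarrow> (nat \<Rightarrow> nat) \<Rightarrow> bool" where
  "avoids es Phi f \<longleftrightarrow>
     (\<forall>j < length es. restrict f (es ! j) \<noteq> Phi j
        \<and> restrict f (es ! j) \<noteq> (\<lambda>v \<in> es ! j. 1 - Phi j v))"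

definition dp2_colorable :: "nat \<Rightarrow> (nat set) list \<Rightarrow> bool" where
  "dp2_colorable n es \<longleftrightarrow>
     (\<forall>Phi. (\<forall>j < length es. Phi j \<in> (es ! j) \<rightarrow>\<^sub>E {0, 1}) \<longrightarrow>
        (\<exists>f \<in> {1..n} \<rightarrow>\<^sub>E {0, 1}. avoids es Phi f))"

end

theory Submission
  imports Defs
begin

text \<open>A map \<open>\<phi> : e \<rightarrow> {0,1}\<close> is the same thing as a face whose fixed positions are \<open>e\<close>:
  the face of all vertices agreeing with \<open>\<phi>\<close> on \<open>e\<close>, and its antipodal face consists of the
  vertices agreeing with \<open>1 - \<phi>\<close> on \<open>e\<close>. So a colouring \<open>f\<close> fails to avoid \<open>\<Phi>\<close> exactly when
  it lies in one of the faces of \<open>\<Phi>\<close> or in its antipode, and \<open>\<Phi>\<close> defeats every colouring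
  exactly when these faces cover the cube.\<close>

definition face_of_map :: "nat \<Rightarrow> nat set \<Rightarrow> (nat \<Rightarrow> nat) \<Rightarrow> nat \<Rightarrow> nat option" where
  "face_of_map n e \<phi> = (\<lambda>i\<in>{1..n}. if i \<in> e then Some (\<phi> i) else None)"

lemma face_of_map_in_tuples:
  assumes "\<phi> \<in> e \<rightarrow>\<^sub>E {0, 1}"
  shows "face_of_map n e \<phi> \<in> tuples n"
  using assms unfolding tuples_def face_of_map_def by (auto simp: PiE_iff)

lemma fixed_positions_face_of_map:
  assumes "e \<subseteq> {1..n}"
  shows "fixed_positions n (face_of_map n e \<phi>) = e"
  using assms unfolding fixed_positions_def face_of_map_def by auto

lemma is_face_face_of_map:
  assumes "e \<subseteq> {1..n}" and "\<phi> \<in> e \<rightarrow>\<^sub>E {0, 1}"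
  shows "is_face n (n - card e) (face_of_map n e \<phi>)"
proof -
  have "{i \<in> {1..n}. face_of_map n e \<phi> i = None} = {1..n} - e"
    unfolding face_of_map_def by auto
  moreover have "card ({1..n} - e) = n - card e"
    using assms(1) by (simp add: card_Diff_subset finite_subset)
  ultimately show ?thesis
    using face_of_map_in_tuples[OF assms(2)] unfolding is_face_def by simp
qed

lemma restrict_the_in_PiE:
  assumes "a \<in> tuples n" and "fixed_positions n a = e"
  shows "(\<lambda>v\<in>e. the (a v)) \<in> e \<rightarrow>\<^sub>E {0, 1}"
proof -
  have "a v \<in> {Some 0, Some 1}" if "v \<in> e" for v
  proof -
    have v: "v \<in> {1..n}" and "a v \<noteq> None"
      using assms(2) that unfolding fixed_positions_def by auto
    moreover have "a v \<in> {None, Some 0, Some 1}"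
      using assms(1) v unfolding tuples_def by (rule PiE_mem)
    ultimately show ?thesis by auto
  qed
  then have "the (a v) \<in> {0, 1}" if "v \<in> e" for v
    using that by fastforce
  then show ?thesis by auto
qed

lemma face_of_map_restrict_the:
  assumes "a \<in> tuples n" and "fixed_positions n a = e"
  shows "face_of_map n e (\<lambda>v\<in>e. the (a v)) = a"
proof
  fix i
  show "face_of_map n e (\<lambda>v\<in>e. the (a v)) i = a i"
    using assms unfolding tuples_def fixed_positions_def face_of_map_def
    by (cases "i \<in> {1..n}") (auto simp: PiE_iff extensional_def)
qed

lemma face_set_subset_cube: "face_set n a \<subseteq> cube n"
  unfolding face_set_def by auto

lemma mem_face_set_face_of_map_iff:
  assumes "e \<subseteq> {1..n}" and "f \<in> cube n"
  shows "f \<in> face_set n (face_of_map n e \<phi>) \<longleftrightarrow> restrict f e = restrict \<phi> e"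
  using assms unfolding face_set_def face_of_map_def restrict_def fun_eq_iff by auto

lemma mem_antipodal_face_set_face_of_map_iff:
  assumes "e \<subseteq> {1..n}" and "f \<in> cube n"
  shows "f \<in> face_set n (antipodal n (face_of_map n e \<phi>)) \<longleftrightarrow>
    restrict f e = (\<lambda>v\<in>e. 1 - \<phi> v)"
  using assms
  unfolding face_set_def antipodal_def face_of_map_def restrict_def fun_eq_iff by auto

lemma not_avoids_iff_mem_faces:
  assumes edges: "\<forall>e \<in> set es. e \<subseteq> {1..n}"
    and Phi: "\<forall>j < length es. Phi j \<in> (es ! j) \<rightarrow>\<^sub>E {0, 1}"
    and f: "f \<in> cube n"
  shows "\<not> avoids es Phi f \<longleftrightarrow> f \<in> (\<Union>j < length es.
    face_set n (face_of_map n (es ! j) (Phi j)) \<union>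
    face_set n (antipodal n (face_of_map n (es ! j) (Phi j))))"
proof -
  have "restrict (Phi j) (es ! j) = Phi j" if "j < length es" for j
    using Phi that by (simp add: PiE_iff extensional_restrict)
  then show ?thesis
    using edges f unfolding avoids_def
    by (auto simp: mem_face_set_face_of_map_iff mem_antipodal_face_set_face_of_map_iff)
qed

theorem proposition7:
  fixes n k :: nat and es :: "nat set list"
  assumes "distinct es"
    and "\<forall>e \<in> set es. e \<subseteq> {1..n} \<and> card e = k"
  shows "\<not> dp2_colorable n es \<longleftrightarrow>
    (\<exists>a :: nat \<Rightarrow> nat \<Rightarrow> nat option.
       (\<forall>j < length es. is_face n (n - k) (a j) \<and> fixed_positions n (a j) = es ! j)
       \<and> (\<Union>j < length es. face_set n (a j) \<union> face_set n (antipodal n (a j))) = cube n)"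
    (is "_ \<longleftrightarrow> (\<exists>a. ?faces a \<and> ?covers a)")
proof
  assume "\<not> dp2_colorable n es"
  then obtain Phi where Phi: "\<forall>j < length es. Phi j \<in> (es ! j) \<rightarrow>\<^sub>E {0, 1}"
    and none_avoids: "\<forall>f \<in> cube n. \<not> avoids es Phi f"
    unfolding dp2_colorable_def cube_def by auto
  let ?a = "\<lambda>j. face_of_map n (es ! j) (Phi j)"
  have "?faces ?a"
    using assms(2) Phi is_face_face_of_map fixed_positions_face_of_map by (metis nth_mem)
  moreover have "?covers ?a"
    using not_avoids_iff_mem_faces[OF _ Phi] none_avoids assms(2) face_set_subset_cube by blast
  ultimately show "\<exists>a. ?faces a \<and> ?covers a" by (rule exI[where x = ?a, OF conjI])
next
  assume "\<exists>a. ?faces a \<and> ?covers a"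
  then obtain a where faces: "?faces a" and covers: "?covers a" by blast
  define Phi where "Phi j = (\<lambda>v\<in>es ! j. the (a j v))" for j
  have tuples: "a j \<in> tuples n" if "j < length es" for j
    using faces that unfolding is_face_def by blast
  have Phi_maps: "\<forall>j < length es. Phi j \<in> (es ! j) \<rightarrow>\<^sub>E {0, 1}"
    using faces tuples restrict_the_in_PiE unfolding Phi_def by blast
  have a_eq: "a j = face_of_map n (es ! j) (Phi j)" if "j < length es" for j
    using faces tuples that face_of_map_restrict_the unfolding Phi_def by metis
  have "\<not> avoids es Phi f" if f: "f \<in> cube n" for f
  proof -
    obtain j where "j < length es"
      and "f \<in> face_set n (a j) \<union> face_set n (antipodal n (a j))"
      using covers f by blast
    then show ?thesis
      using not_avoids_iff_mem_faces[OF _ Phi_maps f] assms(2) a_eq by auto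
  qed
  with Phi_maps show "\<not> dp2_colorable n es"
    unfolding dp2_colorable_def cube_def by blast
qed

end
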